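(* Let $\mu\in\mathcal P_c^*(\mathbb R^2)$, $\mathbf A\in\mathrm{GL}(2)$, $\mathbf y\in\mathbb R^2$ and $\mu_{\mathbf A,\mathbf y}=(\mathbf A\cdot+\mathbf y)_\#\mu$. Then for every $\theta\in\mathbb S_1$, $$\mathcal N_\theta[\mu_{\mathbf A,\mathbf y}]=\mathcal N_{\mathbf A^\top\theta/\|\mathbf A^\top\theta\|}[\mu].$$
   Context: $\mathbb S_1=\{x\in\mathbb R^2:\|x\|=1\}$; $\mathcal R_\theta[\mu]=(\langle\cdot,\theta\rangle)_\#\mu$. Fix a reference Borel probability measure $\rho$ on $\mathbb R$ without atoms. For a probability measure $\nu$ on $\mathbb R$ with $F_\nu(t)=\nu((-\infty,t])$, $F_\nu^{[-1]}(t)=\inf\{s:F_\nu(s)>t\}$ and the CDT is $\hat\nu=F_\nu^{[-1]}\circ F_\rho$; $\widehat{\mathcal R}_\theta[\mu]$ is the CDT of $\mathcal R_\theta[\mu]$. For $g\in L^2_\rho(\mathbb R)$, $\operatorname{mean}(g)=\int g\,\mathrm d\rho$, $\operatorname{std}(g)=(\int|g-\operatorname{mean}(g)|^2\mathrm d\rho)^{1/2}$. $\mathcal P_c^*(\mathbb R^2)$ is the set of compactly supported Borel probability measures on $\mathbb R^2$ whose support has affine hull of dimension $>1$. For such $\mu$, the normalized R-CDT is $\mathcal N_\theta[\mu](t)=\big(\widehat{\mathcal R}_\theta[\mu](t)-\operatorname{mean}(\widehat{\mathcal R}_\theta[\mu])\big)/\operatorname{std}(\widehat{\mathcal R}_\theta[\mu])$,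 $t\in\mathbb R$. *)

theory Defs
  imports "HOL-Probability.Probability"
begin

definition msupport :: "'a::metric_space measure \<Rightarrow> 'a set" where
  "msupport M = {x. \<forall>e>0. emeasure M (ball x e) > 0}"

definition Pcstar :: "(real^2) measure \<Rightarrow> bool" where
  "Pcstar \<mu> \<longleftrightarrow> prob_space \<mu> \<and> sets \<mu> = sets borel \<and> compact (msupport \<mu>)
      \<and> aff_dim (msupport \<mu>) > 1"

definition radon :: "real^2 \<Rightarrow> (real^2) measure \<Rightarrow> real measure" where
  "radon \<theta> \<mu> = distr \<mu> borel (\<lambda>x. x \<bullet> \<theta>)"

definition cdf_of :: "real measure \<Rightarrow> real \<Rightarrow> real" where
  "cdf_of \<nu> t = measure \<nu> {..t}"

definition gen_inv :: "(real \<Rightarrow> real) \<Rightarrow> real \<Rightarrow> real" where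
  "gen_inv F t = Inf {s. F s > t}"

definition cdt :: "real measure \<Rightarrow> real measure \<Rightarrow> real \<Rightarrow> real" where
  "cdt \<rho> \<nu> = gen_inv (cdf_of \<nu>) \<circ> cdf_of \<rho>"

definition mean_rho :: "real measure \<Rightarrow> (real \<Rightarrow> real) \<Rightarrow> real" where
  "mean_rho \<rho> g = (\<integral>t. g t \<partial>\<rho>)"

definition std_rho :: "real measure \<Rightarrow> (real \<Rightarrow> real) \<Rightarrow> real" where
  "std_rho \<rho> g = sqrt (\<integral>t. (g t - mean_rho \<rho> g)\<^sup>2 \<partial>\<rho>)"

definition nrcdt :: "real measure \<Rightarrow> real^2 \<Rightarrow> (real^2) measure \<Rightarrow> real \<Rightarrow> real" where
  "nrcdt \<rho> \<theta> \<mu> t =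
     (let g = cdt \<rho> (radon \<theta> \<mu>) in (g t - mean_rho \<rho> g) / std_rho \<rho> g)"

end

theory Submission
  imports Defs
begin

text \<open>Write \<open>c = \<parallel>A\<^sup>T\<theta>\<parallel> > 0\<close> and \<open>\<psi> = A\<^sup>T\<theta> / c\<close>. Since \<open>\<langle>Ax + y, \<theta>\<rangle> = c \<langle>x, \<psi>\<rangle> + \<langle>y, \<theta>\<rangle>\<close>,
  the projection of the transformed measure on \<open>\<theta>\<close> is the image of the projection of \<open>\<mu>\<close> on \<open>\<psi>\<close>
  under the increasing affine map \<open>s \<mapsto> c s + \<langle>y, \<theta>\<rangle>\<close>. Generalized inverses of distribution
  functions commute with such maps, so the two CDTs are related by the same map wherever
  \<open>F\<^sub>\<rho> < 1\<close>, i.e. \<open>\<rho>\<close>-almost everywhere because \<open>\<rho>\<close> has no atoms. Compact support makes the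
  CDTs bounded, hence integrable; mean and standard deviation then transform affinely as well,
  and normalization cancels the affine map.\<close>

lemma superlevel_set_subset_atLeast:
  fixes F :: "real \<Rightarrow> real"
  assumes "\<And>s. s < a \<Longrightarrow> F s = 0" and "0 \<le> \<tau>"
  shows "{s. \<tau> < F s} \<subseteq> {a..}"
  using assms by (auto simp: not_less[symmetric])

lemma gen_inv_mem_interval:
  fixes F :: "real \<Rightarrow> real"
  assumes below: "\<And>s. s < a \<Longrightarrow> F s = 0" and above: "\<And>s. b \<le> s \<Longrightarrow> F s = 1"
    and "0 \<le> \<tau>" "\<tau> < 1"
  shows "gen_inv F \<tau> \<in> {a..b}"
proof -
  have sub: "{s. \<tau> < F s} \<subseteq> {a..}"
    using below \<open>0 \<le> \<tau>\<close> by (rule superlevel_set_subset_atLeast)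
  have mem: "b \<in> {s. \<tau> < F s}" using above \<open>\<tau> < 1\<close> by simp
  have "a \<le> Inf {s. \<tau> < F s}" using sub mem by (intro cInf_greatest) auto
  moreover have "Inf {s. \<tau> < F s} \<le> b"
    using sub mem by (intro cInf_lower) (auto intro: bdd_belowI)
  ultimately show ?thesis unfolding gen_inv_def by simp
qed

lemma gen_inv_mono:
  fixes F :: "real \<Rightarrow> real"
  assumes below: "\<And>s. s < a \<Longrightarrow> F s = 0" and above: "\<And>s. b \<le> s \<Longrightarrow> F s = 1"
    and "0 \<le> \<tau>" "\<tau> \<le> \<tau>'" "\<tau>' < 1"
  shows "gen_inv F \<tau> \<le> gen_inv F \<tau>'"
  unfolding gen_inv_def
proof (rule cInf_superset_mono)
  have "b \<in> {s. \<tau>' < F s}" using above \<open>\<tau>' < 1\<close> by simp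
  then show "{s. \<tau>' < F s} \<noteq> {}" by blast
  have "{s. \<tau> < F s} \<subseteq> {a..}" using below \<open>0 \<le> \<tau>\<close> by (rule superlevel_set_subset_atLeast)
  then show "bdd_below {s. \<tau> < F s}" by (meson bdd_below_Ici bdd_below_mono)
  show "{s. \<tau>' < F s} \<subseteq> {s. \<tau> < F s}" using \<open>\<tau> \<le> \<tau>'\<close> by auto
qed

lemma gen_inv_affine:
  fixes F :: "real \<Rightarrow> real" and c d :: real
  assumes "{s. \<tau> < F s} \<noteq> {}" "bdd_below {s. \<tau> < F s}" and "c > 0"
  shows "gen_inv (\<lambda>u. F ((u - d) / c)) \<tau> = c * gen_inv F \<tau> + d"
proof -
  have "{u. \<tau> < F ((u - d) / c)} = (\<lambda>s. c * s + d) ` {s. \<tau> < F s}"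
    using \<open>c > 0\<close> by (auto simp: image_iff intro!: exI[of _ "(_ - d) / c"])
  moreover have "mono (\<lambda>s. c * s + d)" using \<open>c > 0\<close> by (intro monoI) simp
  moreover have "continuous (at_right s) (\<lambda>s. c * s + d)" for s by (intro continuous_intros)
  ultimately show ?thesis
    unfolding gen_inv_def using continuous_at_Inf_mono assms(1,2) by metis
qed

lemma cdf_of_eq_cdf: "cdf_of M = cdf M"
  by (simp add: fun_eq_iff cdf_of_def cdf_def)

lemma cdf_of_distr_affine:
  fixes c d :: real
  assumes sets: "sets \<nu> = sets borel" and "c > 0"
  shows "cdf_of (distr \<nu> borel (\<lambda>s. c * s + d)) u = cdf_of \<nu> ((u - d) / c)"
proof -
  have "(\<lambda>s. c * s + d) \<in> borel_measurable \<nu>"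
    by (subst measurable_cong_sets[OF sets refl]) simp
  moreover have "(\<lambda>s. c * s + d) -` {..u} \<inter> space \<nu> = {..(u - d) / c}"
    using \<open>c > 0\<close> by (auto simp: sets_eq_imp_space_eq[OF sets] pos_le_divide_eq mult.commute)
  ultimately show ?thesis unfolding cdf_of_def by (simp add: measure_distr)
qed

lemma cdf_of_below_support:
  assumes "real_distribution \<nu>" and "AE x in \<nu>. x \<in> {a..b}" and "s < a"
  shows "cdf_of \<nu> s = 0"
proof -
  interpret real_distribution \<nu> by fact
  have "AE x in \<nu>. x \<notin> {..s}" using assms(2) by eventually_elim (use \<open>s < a\<close> in auto)
  then show ?thesis unfolding cdf_of_def by (subst prob_eq_0) auto
qed

lemma cdf_of_above_support:
  assumes "real_distribution \<nu>" and "AE x in \<nu>. x \<in> {a..b}" and "b \<le> s"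
  shows "cdf_of \<nu> s = 1"
proof -
  interpret real_distribution \<nu> by fact
  have "AE x in \<nu>. x \<in> {..s}" using assms(2) by eventually_elim (use \<open>b \<le> s\<close> in auto)
  then show ?thesis unfolding cdf_of_def by (subst prob_eq_1) auto
qed

lemma AE_cdf_of_less_1:
  assumes "real_distribution \<rho>" and atomless: "\<And>x. measure \<rho> {x} = 0"
  shows "AE t in \<rho>. cdf_of \<rho> t < 1"
proof -
  interpret real_distribution \<rho> by fact
  let ?U = "{t. 1 \<le> cdf \<rho> t}"
  show ?thesis
  proof (cases "?U = {}")
    case True
    then show ?thesis by (simp add: cdf_of_eq_cdf not_le)
  next
    case False
    have "closed ?U"
      using atomless isCont_cdf
      by (intro closed_Collect_le continuous_at_imp_continuous_on continuous_on_const) auto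
    moreover have "\<forall>\<^sub>F t in at_bot. cdf \<rho> t < 1"
      using cdf_lim_at_bot by (rule order_tendstoD) simp
    then obtain N where "\<And>t. t \<le> N \<Longrightarrow> cdf \<rho> t < 1" by (auto simp: eventually_at_bot_linorder)
    then have bdd: "bdd_below ?U"
      by (metis (mono_tags) bdd_belowI linorder_not_less mem_Collect_eq nle_le)
    ultimately have "Inf ?U \<in> ?U" using False by (intro closed_contains_Inf)
    then have "cdf \<rho> (Inf ?U) = 1" using cdf_bounded_prob[of "Inf ?U"] by simp
    then have "measure \<rho> {Inf ?U<..} = 0"
      using prob_compl[of "{..Inf ?U}"] by (simp add: cdf_def Compl_eq_Diff_UNIV[symmetric])
    then have "AE t in \<rho>. t \<notin> {Inf ?U<..} \<and> t \<noteq> Inf ?U"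
      using atomless[of "Inf ?U"] by (simp add: prob_eq_0)
    then show ?thesis
    proof eventually_elim
      case (elim t)
      then have "t < Inf ?U" by auto
      then show ?case using bdd cInf_lower[of t ?U] by (force simp: cdf_of_eq_cdf)
    qed
  qed
qed

lemma cdt_measurable:
  assumes \<rho>: "real_distribution \<rho>" and \<nu>: "real_distribution \<nu>" and supp: "AE x in \<nu>. x \<in> {a..b}"
  shows "cdt \<rho> \<nu> \<in> borel_measurable \<rho>"
proof -
  interpret \<rho>: real_distribution \<rho> by fact
  let ?F = "cdf_of \<nu>"
  note below = cdf_of_below_support[OF \<nu> supp] and above = cdf_of_above_support[OF \<nu> supp]
  \<comment> \<open>A monotone extension of \<open>gen_inv ?F\<close> from \<open>[0, 1)\<close>; at \<open>\<tau> = 1\<close> the CDT takes the junk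
    value \<open>gen_inv ?F 1 = Inf {}\<close>, which is treated separately.\<close>
  define m where "m \<tau> = (if \<tau> < 1 then gen_inv ?F (max 0 \<tau>) else b)" for \<tau>
  have "mono m"
  proof (intro monoI)
    fix \<tau> \<tau>' :: real assume "\<tau> \<le> \<tau>'"
    then show "m \<tau> \<le> m \<tau>'"
      using gen_inv_mono[where F="?F" and a=a and b=b and \<tau>="max 0 \<tau>" and \<tau>'="max 0 \<tau>'", OF below above]
        gen_inv_mem_interval[where F="?F" and a=a and b=b and \<tau>="max 0 \<tau>", OF below above]
      unfolding m_def by auto
  qed
  then have [measurable]: "m \<in> borel_measurable borel" by (rule borel_measurable_mono)
  have [measurable]: "cdf_of \<rho> \<in> borel_measurable borel"
    unfolding cdf_of_eq_cdf by (intro borel_measurable_mono monoI \<rho>.cdf_nondecreasing)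
  have "cdt \<rho> \<nu> t = (if cdf_of \<rho> t < 1 then m (cdf_of \<rho> t) else gen_inv ?F 1)" for t
    using \<rho>.cdf_nonneg[of t] \<rho>.cdf_bounded_prob[of t]
    by (auto simp: cdt_def m_def cdf_of_eq_cdf)
  then have "cdt \<rho> \<nu> = (\<lambda>t. if cdf_of \<rho> t < 1 then m (cdf_of \<rho> t) else gen_inv ?F 1)" ..
  also have "\<dots> \<in> borel_measurable borel" by measurable
  finally show ?thesis by (simp add: measurable_cong_sets[OF \<rho>.M_is_borel])
qed

lemma cdt_integrable:
  assumes \<rho>: "real_distribution \<rho>" and \<nu>: "real_distribution \<nu>" and supp: "AE x in \<nu>. x \<in> {a..b}"
  shows "integrable \<rho> (cdt \<rho> \<nu>)"
proof -
  interpret \<rho>: real_distribution \<rho> by fact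
  let ?F = "cdf_of \<nu>"
  note below = cdf_of_below_support[OF \<nu> supp] and above = cdf_of_above_support[OF \<nu> supp]
  have "\<bar>cdt \<rho> \<nu> t\<bar> \<le> max (max \<bar>a\<bar> \<bar>b\<bar>) \<bar>gen_inv ?F 1\<bar>" for t
  proof (cases "cdf_of \<rho> t < 1")
    case True
    then show ?thesis
      using gen_inv_mem_interval[where F="?F" and a=a and b=b and \<tau>="cdf_of \<rho> t", OF below above]
      by (auto simp: cdt_def cdf_of_def)
  next
    case False
    then have "cdf_of \<rho> t = 1" using \<rho>.cdf_bounded_prob[of t] by (simp add: cdf_of_eq_cdf)
    then show ?thesis by (simp add: cdt_def)
  qed
  then show ?thesis
    by (intro \<rho>.integrable_const_bound[where B="max (max \<bar>a\<bar> \<bar>b\<bar>) \<bar>gen_inv ?F 1\<bar>"])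
       (auto intro: cdt_measurable[OF \<rho> \<nu> supp])
qed

lemma cdt_distr_affine:
  fixes c d :: real
  assumes \<nu>: "real_distribution \<nu>" and supp: "AE x in \<nu>. x \<in> {a..b}"
    and "c > 0" and "cdf_of \<rho> t < 1"
  shows "cdt \<rho> (distr \<nu> borel (\<lambda>s. c * s + d)) t = c * cdt \<rho> \<nu> t + d"
proof -
  let ?F = "cdf_of \<nu>" and ?\<tau> = "cdf_of \<rho> t"
  note below = cdf_of_below_support[OF \<nu> supp] and above = cdf_of_above_support[OF \<nu> supp]
  have "0 \<le> ?\<tau>" by (simp add: cdf_of_def)
  have "b \<in> {s. ?\<tau> < ?F s}" using above \<open>?\<tau> < 1\<close> by simp
  moreover have "{s. ?\<tau> < ?F s} \<subseteq> {a..}"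
    using below \<open>0 \<le> ?\<tau>\<close> by (rule superlevel_set_subset_atLeast)
  ultimately have "gen_inv (\<lambda>u. ?F ((u - d) / c)) ?\<tau> = c * gen_inv ?F ?\<tau> + d"
    using \<open>c > 0\<close> by (intro gen_inv_affine) (auto intro: bdd_belowI)
  moreover have "cdf_of (distr \<nu> borel (\<lambda>s. c * s + d)) = (\<lambda>u. ?F ((u - d) / c))"
    using \<open>c > 0\<close> real_distribution.events_eq_borel[OF \<nu>] by (simp add: fun_eq_iff cdf_of_distr_affine)
  ultimately show ?thesis by (simp add: cdt_def)
qed

definition standardize :: "real measure \<Rightarrow> (real \<Rightarrow> real) \<Rightarrow> real \<Rightarrow> real" where
  "standardize \<rho> g t = (g t - mean_rho \<rho> g) / std_rho \<rho> g"

lemma nrcdt_eq_standardize: "nrcdt \<rho> \<theta> \<mu> t = standardize \<rho> (cdt \<rho> (radon \<theta> \<mu>)) t"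
  by (simp add: nrcdt_def standardize_def Let_def)

lemma standardize_affine_AE:
  fixes c d :: real
  assumes "prob_space \<rho>" and g: "integrable \<rho> g" and g': "g' \<in> borel_measurable \<rho>"
    and AE: "AE x in \<rho>. g' x = c * g x + d" and "c > 0" and "g' t = c * g t + d"
  shows "standardize \<rho> g' t = standardize \<rho> g t"
proof -
  interpret prob_space \<rho> by fact
  have mean: "mean_rho \<rho> g' = c * mean_rho \<rho> g + d"
  proof -
    have "mean_rho \<rho> g' = (\<integral>x. c * g x + d \<partial>\<rho>)"
      unfolding mean_rho_def using g g' AE by (intro integral_cong_AE) auto
    also have "\<dots> = c * mean_rho \<rho> g + d" unfolding mean_rho_def using g by (simp add: prob_space)
    finally show ?thesis .
  qed
  have "(\<integral>x. (g' x - mean_rho \<rho> g')\<^sup>2 \<partial>\<rho>) = (\<integral>x. c\<^sup>2 * (g x - mean_rho \<rho> g)\<^sup>2 \<partial>\<rho>)"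
    using g g' AE by (intro integral_cong_AE) (auto simp: mean power_mult_distrib[symmetric] algebra_simps)
  then have "std_rho \<rho> g' = c * std_rho \<rho> g"
    unfolding std_rho_def using \<open>c > 0\<close> by (simp add: real_sqrt_mult)
  with mean show ?thesis
    unfolding standardize_def using \<open>c > 0\<close> \<open>g' t = c * g t + d\<close>
    by (simp add: right_diff_distrib[symmetric])
qed

lemma standardize_cdt_distr_affine:
  fixes c d :: real
  assumes \<rho>: "real_distribution \<rho>" and atomless: "\<And>x. measure \<rho> {x} = 0"
    and \<nu>: "real_distribution \<nu>" and supp: "AE x in \<nu>. x \<in> {a..b}"
    and "c > 0" and "cdf_of \<rho> t < 1"
  shows "standardize \<rho> (cdt \<rho> (distr \<nu> borel (\<lambda>s. c * s + d))) t = standardize \<rho> (cdt \<rho> \<nu>) t"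
proof (rule standardize_affine_AE)
  interpret \<nu>: real_distribution \<nu> by fact
  let ?\<nu>' = "distr \<nu> borel (\<lambda>s. c * s + d)"
  have \<nu>': "real_distribution ?\<nu>'" by (intro \<nu>.real_distribution_distr) simp
  have "AE x in ?\<nu>'. x \<in> {c * a + d..c * b + d}"
    using supp \<open>c > 0\<close> by (subst AE_distr_iff) auto
  then show "cdt \<rho> ?\<nu>' \<in> borel_measurable \<rho>" by (rule cdt_measurable[OF \<rho> \<nu>'])
  show "integrable \<rho> (cdt \<rho> \<nu>)" by (rule cdt_integrable[OF \<rho> \<nu> supp])
  show "AE x in \<rho>. cdt \<rho> ?\<nu>' x = c * cdt \<rho> \<nu> x + d"
    using AE_cdf_of_less_1[OF \<rho> atomless]
    by eventually_elim (rule cdt_distr_affine[OF \<nu> supp \<open>c > 0\<close>])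
  show "cdt \<rho> ?\<nu>' t = c * cdt \<rho> \<nu> t + d"
    by (rule cdt_distr_affine[OF \<nu> supp \<open>c > 0\<close> \<open>cdf_of \<rho> t < 1\<close>])
qed (use \<rho> \<open>c > 0\<close> in \<open>auto simp: real_distribution_def\<close>)

lemma AE_in_msupport:
  fixes \<mu> :: "'a::{metric_space, second_countable_topology} measure"
  assumes "sets \<mu> = sets borel"
  shows "AE x in \<mu>. x \<in> msupport \<mu>"
proof -
  define \<B> where "\<B> = {ball x e | x e. emeasure \<mu> (ball x e) = 0}"
  obtain \<C> where \<C>: "\<C> \<subseteq> \<B>" "countable \<C>" "\<Union>\<C> = \<Union>\<B>"
    using Lindelof[of \<B>] by (auto simp: \<B>_def)
  have "B \<in> null_sets \<mu>" if "B \<in> \<C>" for B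
    using that \<C>(1) assms by (auto simp: \<B>_def null_sets_def)
  then have "\<Union>\<C> \<in> null_sets \<mu>" using null_sets_UN'[OF \<open>countable \<C>\<close>, of id] by simp
  moreover have "{x \<in> space \<mu>. x \<notin> msupport \<mu>} \<subseteq> \<Union>\<C>"
  proof
    fix x assume "x \<in> {x \<in> space \<mu>. x \<notin> msupport \<mu>}"
    then obtain e where "e > 0" "emeasure \<mu> (ball x e) = 0" by (auto simp: msupport_def not_less)
    then have "ball x e \<in> \<B>" "x \<in> ball x e" unfolding \<B>_def by auto
    then show "x \<in> \<Union>\<C>" unfolding \<C>(3) by blast
  qed
  ultimately show ?thesis by (rule AE_I')
qed

lemma real_distribution_radon:
  assumes "prob_space \<mu>" and "sets \<mu> = sets borel"
  shows "real_distribution (radon \<theta> \<mu>)"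
  unfolding radon_def using assms
  by (intro prob_space.real_distribution_distr) (simp_all add: measurable_cong_sets[OF assms(2) refl])

lemma radon_bounded_support:
  assumes "sets \<mu> = sets borel" and "bounded (msupport \<mu>)"
  obtains R where "AE s in radon \<theta> \<mu>. s \<in> {-R..R}"
proof -
  obtain r where r: "\<And>x. x \<in> msupport \<mu> \<Longrightarrow> norm x \<le> r" using assms(2) by (auto simp: bounded_iff)
  have bound: "x \<bullet> \<theta> \<in> {-(r * norm \<theta>)..r * norm \<theta>}" if "x \<in> msupport \<mu>" for x
    using Cauchy_Schwarz_ineq2[of x \<theta>] mult_right_mono[OF r[OF that] norm_ge_zero[of \<theta>]]
    by (simp add: abs_le_iff)
  have "AE x in \<mu>. x \<bullet> \<theta> \<in> {-(r * norm \<theta>)..r * norm \<theta>}"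
    using AE_in_msupport[OF assms(1)] by eventually_elim (rule bound)
  then have "AE s in radon \<theta> \<mu>. s \<in> {-(r * norm \<theta>)..r * norm \<theta>}"
    unfolding radon_def by (subst AE_distr_iff) (simp_all add: measurable_cong_sets[OF assms(1) refl])
  then show ?thesis by (rule that)
qed

lemma radon_distr_affine:
  fixes \<mu> :: "(real^2) measure" and A :: "real^2^2"
  assumes "sets \<mu> = sets borel" and "transpose A *v \<theta> = c *\<^sub>R \<psi>"
  shows "radon \<theta> (distr \<mu> borel (\<lambda>x. A *v x + y)) = distr (radon \<psi> \<mu>) borel (\<lambda>s. c * s + y \<bullet> \<theta>)"
proof -
  have "(A *v x + y) \<bullet> \<theta> = c * (x \<bullet> \<psi>) + y \<bullet> \<theta>" for x
    using dot_lmul_matrix[of x "transpose A" \<theta>] assms(2)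
    by (simp add: inner_add_left)
  moreover have "(\<lambda>x. A *v x + y) \<in> borel_measurable borel"
    by (intro borel_measurable_continuous_onI continuous_intros)
  ultimately show ?thesis
    unfolding radon_def using assms(1)
    by (subst (1 2) distr_distr) (simp_all add: measurable_cong_sets[OF assms(1) refl] comp_def)
qed

theorem proposition6:
  fixes \<rho> :: "real measure" and \<mu> :: "(real^2) measure"
    and A :: "real^2^2" and y :: "real^2" and \<theta> :: "real^2" and t :: real
  assumes "prob_space \<rho>" and "sets \<rho> = sets borel" and "\<And>x. measure \<rho> {x} = 0"
    and "Pcstar \<mu>"
    and "invertible A"
    and "norm \<theta> = 1"
    and "cdf_of \<rho> t < 1"
  shows "nrcdt \<rho> \<theta> (distr \<mu> borel (\<lambda>x. A *v x + y)) t
       = nrcdt \<rho> ((1 / norm (transpose A *v \<theta>)) *\<^sub>R (transpose A *v \<theta>)) \<mu> t"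
proof -
  have \<rho>: "real_distribution \<rho>"
    using assms(1,2) by (simp add: real_distribution_def real_distribution_axioms_def)
  have \<mu>: "prob_space \<mu>" "sets \<mu> = sets borel" "bounded (msupport \<mu>)"
    using assms(4) compact_imp_bounded by (auto simp: Pcstar_def)
  define c where "c = norm (transpose A *v \<theta>)"
  define \<psi> where "\<psi> = (1 / c) *\<^sub>R (transpose A *v \<theta>)"
  have "invertible (transpose A)" using assms(5) by (rule transpose_invertible)
  then have "transpose A *v \<theta> \<noteq> 0"
    using assms(6) matrix_left_invertible_ker invertible_left_inverse by fastforce
  then have "c > 0" and "transpose A *v \<theta> = c *\<^sub>R \<psi>" by (simp_all add: c_def \<psi>_def)
  obtain R where supp: "AE s in radon \<psi> \<mu>. s \<in> {-R..R}"
    using radon_bounded_support[OF \<mu>(2,3)] .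
  have "nrcdt \<rho> \<theta> (distr \<mu> borel (\<lambda>x. A *v x + y)) t
      = standardize \<rho> (cdt \<rho> (distr (radon \<psi> \<mu>) borel (\<lambda>s. c * s + y \<bullet> \<theta>))) t"
    by (simp add: nrcdt_eq_standardize radon_distr_affine[OF \<mu>(2) \<open>transpose A *v \<theta> = c *\<^sub>R \<psi>\<close>])
  also have "\<dots> = standardize \<rho> (cdt \<rho> (radon \<psi> \<mu>)) t"
    using standardize_cdt_distr_affine[OF \<rho> assms(3) real_distribution_radon[OF \<mu>(1,2)] supp
        \<open>c > 0\<close> assms(7)] .
  finally show ?thesis by (simp add: nrcdt_eq_standardize \<psi>_def c_def)
qed

end
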